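(* Let $d>0$, and for each integer $M>d$ let $\tilde{\mathcal D}_M$ be the scaled mean-field node-based function (with $p=d/M$) defined in the context. Then for every integer $N>d$ and all integers $N_1,N_2\ge N$, $$\sup_{(\alpha,\beta)\in[0,1)^2}\bigl|\tilde{\mathcal D}_{N_1}(\alpha,\beta)-\tilde{\mathcal D}_{N_2}(\alpha,\beta)\bigr|\le \frac{16d^2}{N}e^{8d}.$$
   Context: Mean-field node-based recursion: fix $M$ and $p\in(0,1]$. For $i,j\in\{1,\dots,M\}$ define $D_M(i,j)$ and $S_M(i,j)$ jointly by $S_M(i,j)=1-\sum_{k=1}^{j-1}D_M(i,k)$, $D_M(i,i)=0$, and $D_M(i,j)=p\,S_M(i,j)\,S_M(j,i)$ for $i\ne j$ (well defined by induction on $i+j$). For $\alpha\in[0,1)$ write $i_M(\alpha)=\lfloor M\alpha\rfloor+1$. The scaled function is $\tilde{\mathcal D}_M(\alpha,\beta)=M\,D_M(i_M(\alpha),i_M(\beta))$ if $\lfloor M\alpha\rfloor\neq\lfloor M\beta\rfloor$, and $\tilde{\mathcal D}_M(\alpha,\beta)=M p\,S_M(i_M(\alpha),i_M(\alpha))^2$ otherwise, with $p=d/M$. *)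

theory Defs
  imports Complex_Main
begin

function nbS :: "real \<Rightarrow> nat \<Rightarrow> nat \<Rightarrow> real" where
  "nbS p i j = 1 - (\<Sum>k\<in>{1..<j}. (if i = k then 0 else p * nbS p i k * nbS p k i))"
  by auto
termination
  by (relation "measure (\<lambda>(p, i, j). i + j)") auto

definition nbD :: "real \<Rightarrow> nat \<Rightarrow> nat \<Rightarrow> real" where
  "nbD p i j = (if i = j then 0 else p * nbS p i j * nbS p j i)"

lemma nbS_eq: "nbS p i j = 1 - (\<Sum>k\<in>{1..<j}. nbD p i k)"
  by (simp add: nbD_def)

definition iM :: "nat \<Rightarrow> real \<Rightarrow> nat" where
  "iM M \<alpha> = nat \<lfloor>real M * \<alpha>\<rfloor> + 1"

definition scaledD :: "real \<Rightarrow> nat \<Rightarrow> real \<Rightarrow> real \<Rightarrow> real" where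
  "scaledD d M \<alpha> \<beta> =
     (let p = d / real M in
      if \<lfloor>real M * \<alpha>\<rfloor> \<noteq> \<lfloor>real M * \<beta>\<rfloor>
      then real M * nbD p (iM M \<alpha>) (iM M \<beta>)
      else real M * p * (nbS p (iM M \<alpha>) (iM M \<alpha>))^2)"

end

theory Submission
  imports Defs
begin

(* Compare a resolution M with its refinement k*M.  The fine index c lies in
   the coarse cell (c - 1) div k + 1, and the fine edge probability is
   q = d/(kM) = p/k where p = d/M.  Scanning a fine row a of S_q through the
   k fine columns b of a coarse block m multiplies it by k factors
   1 - q S_q(b,a); each is within q E(b,a) of 1 - q S_p(m, cell a), and k such
   factors together are within p^2/2 of the single coarse factor
   1 - p S_p(m, cell a).  Accumulating these errors gives, for the discrepancy
   E a b = |S_q(a,b) - S_p(cell a, cell b)|, the Volterra-type inequality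
       E a b <= eta + q * (sum of E c a over 1 <= c < b),  eta = M p^2/2 + 2p,
   and a discrete Gronwall argument yields E <= eta e^(2d) = O(d^2/M).  As the
   scaled function equals d S(i,j) S(j,i), refining moves it by at most
   8 d^2 e^(8d) / M; two resolutions N1, N2 >= N are then compared through
   their common refinement N1 * N2. *)

(* The recursion equation of nbS would unfold indefinitely; we reason
   through nbS_eq and the lemmas below instead. *)
declare nbS.simps[simp del]

lemma nbS_init: "j \<le> 1 \<Longrightarrow> nbS p i j = 1"
  by (simp add: nbS_eq)

lemma nbS_Suc: "1 \<le> j \<Longrightarrow> nbS p i (Suc j) = nbS p i j - nbD p i j"
  by (simp add: nbS_eq atLeastLessThanSuc)

lemma nbS_Suc_factor:
  "1 \<le> j \<Longrightarrow> nbS p i (Suc j) = nbS p i j * (if i = j then 1 else 1 - p * nbS p j i)"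
  by (simp add: nbS_Suc nbD_def algebra_simps)

lemma nbS_range:
  assumes "0 \<le> p" "p \<le> 1"
  shows "0 \<le> nbS p i j \<and> nbS p i j \<le> 1"
proof (induction "i + j" arbitrary: i j rule: less_induct)
  case less
  show ?case
  proof (cases "j \<le> 1")
    case True
    then show ?thesis by (simp add: nbS_init)
  next
    case False
    then obtain j' where j': "j = Suc j'" "1 \<le> j'" by (cases j) auto
    have "0 \<le> nbS p i j' \<and> nbS p i j' \<le> 1" "0 \<le> nbS p j' i \<and> nbS p j' i \<le> 1"
      using less j' by auto
    then show ?thesis using assms nbS_Suc_factor[OF j'(2), of p i] j'(1)
      by (auto simp: mult_le_one)
  qed
qed

lemma nbS_Suc_close:
  assumes "0 \<le> p" "p \<le> 1" "1 \<le> j"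
  shows "\<bar>nbS p i (Suc j) - nbS p i j\<bar> \<le> p"
proof -
  have "0 \<le> nbD p i j \<and> nbD p i j \<le> p"
    using nbS_range[OF assms(1,2), of i j] nbS_range[OF assms(1,2), of j i] assms(1)
    by (auto simp: nbD_def mult.assoc mult_le_one mult_left_le)
  then show ?thesis using nbS_Suc[OF assms(3)] by simp
qed

lemma abs_mult_diff_le:
  fixes x y u v :: real
  assumes "0 \<le> y" "y \<le> 1" "0 \<le> u" "u \<le> 1"
  shows "\<bar>x * y - u * v\<bar> \<le> \<bar>x - u\<bar> + \<bar>y - v\<bar>"
proof -
  have "x * y - u * v = (x - u) * y + u * (y - v)" by (simp add: algebra_simps)
  then have "\<bar>x * y - u * v\<bar> \<le> \<bar>x - u\<bar> * y + u * \<bar>y - v\<bar>"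
    using assms abs_triangle_ineq[of "(x - u) * y" "u * (y - v)"] by (simp add: abs_mult)
  also have "\<dots> \<le> \<bar>x - u\<bar> + \<bar>y - v\<bar>"
    using assms by (intro add_mono) (auto intro: mult_left_le mult_left_le_one_le)
  finally show ?thesis .
qed

lemma power_one_minus_bounds:
  fixes y :: real
  assumes "0 \<le> y" "y \<le> 1"
  shows "1 - real n * y \<le> (1 - y)^n" "(1 - y)^n \<le> 1 - real n * y + (real n * y)^2 / 2"
proof -
  show "1 - real n * y \<le> (1 - y)^n"
    using Bernoulli_inequality[of "- y" n] assms by simp
  show "(1 - y)^n \<le> 1 - real n * y + (real n * y)^2 / 2"
  proof (induction n)
    case (Suc n)
    have "(1 - y)^(Suc n) \<le> (1 - y) * (1 - real n * y + (real n * y)^2 / 2)"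
      using Suc assms by (simp add: mult_left_mono)
    also have "\<dots> \<le> 1 - real (Suc n) * y + (real (Suc n) * y)^2 / 2"
      using assms by (simp add: algebra_simps power2_eq_square)
    finally show ?case .
  qed simp
qed

lemma discrete_gronwall:
  fixes E :: "nat \<Rightarrow> nat \<Rightarrow> real" and \<eta> q :: real
  assumes "0 \<le> \<eta>" "0 \<le> q"
    and recursion: "\<And>a b. a \<in> {1..n} \<Longrightarrow> b \<in> {1..n} \<Longrightarrow>
                      E a b \<le> \<eta> + q * (\<Sum>c\<in>{1..<b}. E c a)"
  shows "a \<in> {1..n} \<Longrightarrow> b \<in> {1..n} \<Longrightarrow> E a b \<le> \<eta> * (1 + q)^(a + b)"
proof (induction "a + b" arbitrary: a b rule: less_induct)
  case less
  have geometric: "q * (\<Sum>c<b. (1 + q)^c) = (1 + q)^b - 1"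
    by (induction b) (auto simp: algebra_simps)
  have "(\<Sum>c\<in>{1..<b}. E c a) \<le> (\<Sum>c\<in>{1..<b}. \<eta> * (1 + q)^(c + a))"
    using less by (intro sum_mono) auto
  also have "\<dots> \<le> (\<Sum>c<b. \<eta> * (1 + q)^(c + a))"
    using assms(1,2) by (intro sum_mono2) auto
  also have "\<dots> = \<eta> * (1 + q)^a * (\<Sum>c<b. (1 + q)^c)"
    by (simp add: sum_distrib_left power_add algebra_simps)
  finally have "q * (\<Sum>c\<in>{1..<b}. E c a) \<le> \<eta> * (1 + q)^a * ((1 + q)^b - 1)"
    using assms(2) geometric by (metis mult.left_commute mult_left_mono)
  then have "E a b \<le> \<eta> + \<eta> * (1 + q)^a * ((1 + q)^b - 1)"
    using recursion[OF less.prems] by linarith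
  also have "\<dots> = \<eta> * (1 + q)^(a + b) - \<eta> * ((1 + q)^a - 1)"
    by (simp add: power_add algebra_simps)
  also have "\<dots> \<le> \<eta> * (1 + q)^(a + b)"
    using assms(1,2) by (simp add: one_le_power)
  finally show ?case .
qed

lemma iM_range:
  assumes "1 \<le> M" "0 \<le> \<alpha>" "\<alpha> < 1"
  shows "iM M \<alpha> \<in> {1..M}"
proof -
  have "\<lfloor>real M * \<alpha>\<rfloor> < int M"
    using assms by (simp add: floor_less_iff)
  then have "nat \<lfloor>real M * \<alpha>\<rfloor> < M" using assms(2) by (simp add: nat_less_iff)
  then show ?thesis by (simp add: iM_def)
qed

lemma iM_refine:
  assumes "1 \<le> k" "0 \<le> \<alpha>"
  shows "(iM (k * M) \<alpha> - 1) div k + 1 = iM M \<alpha>"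
proof -
  have "\<lfloor>real M * \<alpha>\<rfloor> = \<lfloor>real (k * M) * \<alpha>\<rfloor> div int k"
    using floor_divide_real_eq_div[of "int k" "real (k * M) * \<alpha>"] assms by simp
  then show ?thesis using assms by (simp add: iM_def nat_div_distrib)
qed

(* On and off the diagonal blocks the scaled function has the same product form
   d S(i,j) S(j,i); this removes the case split in its definition. *)
lemma scaledD_eq_product:
  assumes "1 \<le> M" "0 \<le> \<alpha>" "0 \<le> \<beta>"
  shows "scaledD d M \<alpha> \<beta> =
    d * (nbS (d / real M) (iM M \<alpha>) (iM M \<beta>) * nbS (d / real M) (iM M \<beta>) (iM M \<alpha>))"
proof (cases "\<lfloor>real M * \<alpha>\<rfloor> = \<lfloor>real M * \<beta>\<rfloor>")
  case True
  then have "iM M \<alpha> = iM M \<beta>" by (simp add: iM_def)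
  then show ?thesis using True assms(1) by (simp add: scaledD_def Let_def power2_eq_square)
next
  case False
  then have "iM M \<alpha> \<noteq> iM M \<beta>"
    using assms(2,3) by (simp add: iM_def eq_nat_nat_iff)
  then show ?thesis using False assms(1) by (simp add: scaledD_def Let_def nbD_def)
qed

lemma exp_constant_bound:
  fixes d :: real
  assumes "0 < d"
  shows "(d^3 + 4 * d^2) * exp (2 * d) \<le> 8 * d^2 * exp (8 * d)"
proof -
  have "d \<le> exp (6 * d)" using exp_ge_add_one_self[of "6 * d"] assms by linarith
  then have "d * exp (2 * d) \<le> exp (6 * d) * exp (2 * d)" by (rule mult_right_mono) simp
  also have "\<dots> = exp (8 * d)" by (simp flip: exp_add)
  finally have "d * exp (2 * d) \<le> exp (8 * d)" .
  moreover have "exp (2 * d) \<le> exp (8 * d)" using assms by simp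
  ultimately have "d^2 * (d * exp (2 * d)) + 4 * d^2 * exp (2 * d)
      \<le> d^2 * exp (8 * d) + 4 * d^2 * exp (8 * d)"
    by (intro add_mono mult_left_mono) auto
  also have "\<dots> \<le> 8 * d^2 * exp (8 * d)" by simp
  finally show ?thesis by (simp add: power3_eq_cube power2_eq_square algebra_simps)
qed

locale refinement =
  fixes d :: real and M k :: nat
  assumes d_pos: "0 < d" and d_le_M: "d \<le> real M" and k_pos: "1 \<le> k"
begin

definition p :: real where "p = d / real M"
definition q :: real where "q = d / real (k * M)"
definition cell :: "nat \<Rightarrow> nat" where "cell c = (c - 1) div k + 1"
definition E :: "nat \<Rightarrow> nat \<Rightarrow> real" where
  "E a b = \<bar>nbS q a b - nbS p (cell a) (cell b)\<bar>"

lemma M_pos: "1 \<le> M"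
  using d_pos d_le_M by (cases M) auto

lemma k_times_q: "real k * q = p"
  using k_pos M_pos by (simp add: p_def q_def)

lemma p_pos: "0 < p" and p_le_one: "p \<le> 1"
  using d_pos d_le_M M_pos by (simp_all add: p_def)

lemma q_pos: "0 < q" and q_le_p: "q \<le> p"
proof -
  show "0 < q" using d_pos M_pos k_pos by (simp add: q_def)
  then show "q \<le> p" using k_times_q k_pos mult_right_mono[of 1 "real k" q] by simp
qed

lemma q_le_one: "q \<le> 1"
  using q_le_p p_le_one by simp

lemma S_p_range: "0 \<le> nbS p i j" "nbS p i j \<le> 1"
  using nbS_range[of p i j] p_pos p_le_one by auto

lemma S_q_range: "0 \<le> nbS q i j" "nbS q i j \<le> 1"
  using nbS_range[of q i j] q_pos q_le_one by auto

lemma q_factor_range: "0 \<le> 1 - q * x" "1 - q * x \<le> 1" if "0 \<le> x" "x \<le> 1" for x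
  using that q_pos q_le_one by (auto simp: mult_le_one)

lemma cell_block: "1 \<le> m \<Longrightarrow> r < k \<Longrightarrow> cell ((m - 1) * k + r + 1) = m"
  by (simp add: cell_def)

(* Invariant for scanning a fine row a across block m (fine column
   (m-1)k + r + 1, offset r): S_q is approximated by the coarse value S_p(cell a, m)
   times the product block_factor of the r fine factors seen so far in the block,
   with error block_err (p^2/2 per completed block, p once the own block is
   passed, r q inside the own block) plus the propagated discrepancies. *)
definition block_factor :: "nat \<Rightarrow> nat \<Rightarrow> nat \<Rightarrow> real" where
  "block_factor a m r = (if m = cell a then 1 else (1 - q * nbS p m (cell a))^r)"

definition block_err :: "nat \<Rightarrow> nat \<Rightarrow> nat \<Rightarrow> real" where
  "block_err a m r = real (m - 1) * p^2 / 2
     + (if cell a < m then p else if m = cell a then real r * q else 0)"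

definition block_approx :: "nat \<Rightarrow> nat \<Rightarrow> nat \<Rightarrow> bool" where
  "block_approx a m r \<longleftrightarrow>
     \<bar>nbS q a ((m - 1) * k + r + 1) - nbS p (cell a) m * block_factor a m r\<bar>
       \<le> block_err a m r + q * (\<Sum>c\<in>{1..<(m - 1) * k + r + 1}. E c a)"

lemma block_factor_range: "0 \<le> block_factor a m r" "block_factor a m r \<le> 1"
  using q_factor_range[OF S_p_range] by (auto simp: block_factor_def power_le_one)

lemma block_factor_close:
  assumes "r \<le> k"
  shows "\<bar>block_factor a m r - 1\<bar> \<le> (if m = cell a then 0 else p)"
proof (cases "m = cell a")
  case False
  define y where "y = q * nbS p m (cell a)"
  have y: "0 \<le> y" "y \<le> 1" using q_factor_range[OF S_p_range] q_pos S_p_range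
    by (auto simp: y_def)
  have "y \<le> q" using S_p_range(2) q_pos mult_left_mono[of _ 1 q] by (simp add: y_def)
  then have "real r * y \<le> real r * q" by (simp add: mult_left_mono)
  also have "\<dots> \<le> real k * q" using assms q_pos by (simp add: mult_right_mono)
  finally have "real r * y \<le> p" using k_times_q by simp
  moreover have "(1 - y)^r \<le> 1" using y by (simp add: power_le_one)
  ultimately show ?thesis
    using power_one_minus_bounds(1)[OF y, of r] False by (simp add: block_factor_def y_def)
qed (simp add: block_factor_def)

lemma block_err_next: "1 \<le> m \<Longrightarrow> block_err a (Suc m) 0 = block_err a m k + p^2 / 2"
  using k_times_q by (auto simp: block_err_def of_nat_diff field_simps)

lemma block_err_bound:
  assumes "m \<le> M" "r \<le> k"
  shows "block_err a m r + (if m = cell a then 0 else p) \<le> real M * p^2 / 2 + 2 * p"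
proof -
  have "real (m - 1) * p^2 / 2 \<le> real M * p^2 / 2"
    using assms(1) by (intro divide_right_mono mult_right_mono) auto
  moreover have "real r * q \<le> p"
    using assms(2) q_pos k_times_q mult_right_mono[of "real r" "real k" q] by simp
  ultimately show ?thesis using p_pos q_pos
    unfolding block_err_def by (simp only: split: if_split) (intro conjI impI; linarith)
qed


(* A fine step inside a foreign block m: both sides gain one factor, and the
   factors differ by q E(b,a). *)
lemma block_approx_step_other:
  assumes b: "1 \<le> b" "cell b = m" and other: "m \<noteq> cell a"
    and approx: "\<bar>nbS q a b - nbS p (cell a) m * block_factor a m r\<bar>
                   \<le> block_err a m r + q * (\<Sum>c\<in>{1..<b}. E c a)"
  shows "\<bar>nbS q a (Suc b) - nbS p (cell a) m * block_factor a m (Suc r)\<bar>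
           \<le> block_err a m (Suc r) + q * (\<Sum>c\<in>{1..<Suc b}. E c a)"
proof -
  have "a \<noteq> b" using b other by auto
  then have fine: "nbS q a (Suc b) = nbS q a b * (1 - q * nbS q b a)"
    using nbS_Suc_factor[OF b(1)] by simp
  have coarse: "nbS p (cell a) m * block_factor a m (Suc r)
      = nbS p (cell a) m * block_factor a m r * (1 - q * nbS p m (cell a))"
    using other by (simp add: block_factor_def)
  have "\<bar>nbS q a (Suc b) - nbS p (cell a) m * block_factor a m (Suc r)\<bar>
      \<le> \<bar>nbS q a b - nbS p (cell a) m * block_factor a m r\<bar>
        + \<bar>(1 - q * nbS q b a) - (1 - q * nbS p m (cell a))\<bar>"
    unfolding fine coarse using q_factor_range[OF S_q_range] S_p_range block_factor_range
    by (intro abs_mult_diff_le) (auto simp: mult_le_one)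
  also have "\<bar>(1 - q * nbS q b a) - (1 - q * nbS p m (cell a))\<bar> = q * E b a"
    using q_pos b(2) by (simp add: E_def abs_mult flip: right_diff_distrib abs_minus_commute)
  moreover have "block_err a m (Suc r) = block_err a m r"
    using other by (simp add: block_err_def)
  moreover have "(\<Sum>c\<in>{1..<Suc b}. E c a) = (\<Sum>c\<in>{1..<b}. E c a) + E b a"
    using b(1) by (simp add: atLeastLessThanSuc)
  ultimately show ?thesis using approx by (simp add: distrib_left)
qed

(* A fine step inside the row's own block: the coarse side is frozen, the fine
   side moves by at most q, which is paid by the error term r q. *)
lemma block_approx_step_own:
  assumes b: "1 \<le> b" and own: "m = cell a"
    and approx: "\<bar>nbS q a b - nbS p (cell a) m * block_factor a m r\<bar>
                   \<le> block_err a m r + q * (\<Sum>c\<in>{1..<b}. E c a)"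
  shows "\<bar>nbS q a (Suc b) - nbS p (cell a) m * block_factor a m (Suc r)\<bar>
           \<le> block_err a m (Suc r) + q * (\<Sum>c\<in>{1..<Suc b}. E c a)"
proof -
  have "\<bar>nbS q a (Suc b) - nbS q a b\<bar> \<le> q"
    using nbS_Suc_close[OF _ q_le_one b] q_pos by simp
  moreover have "0 \<le> q * E b a" using q_pos by (simp add: E_def)
  moreover have "block_err a m (Suc r) = block_err a m r + q"
    using own by (simp add: block_err_def algebra_simps)
  moreover have "block_factor a m (Suc r) = block_factor a m r"
    using own by (simp add: block_factor_def)
  moreover have "(\<Sum>c\<in>{1..<Suc b}. E c a) = (\<Sum>c\<in>{1..<b}. E c a) + E b a"
    using b by (simp add: atLeastLessThanSuc)
  ultimately show ?thesis using approx by (simp add: distrib_left)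
qed

lemma block_approx_step:
  assumes "1 \<le> m" "r < k" "block_approx a m r"
  shows "block_approx a m (Suc r)"
proof -
  define b where "b = (m - 1) * k + r + 1"
  have b: "1 \<le> b" "cell b = m" using cell_block[OF assms(1,2)] by (simp_all add: b_def)
  have "(m - 1) * k + Suc r + 1 = Suc b" by (simp add: b_def)
  then show ?thesis
    using assms(3) block_approx_step_other[OF b] block_approx_step_own[OF b(1)]
    unfolding block_approx_def b_def[symmetric] by (cases "m = cell a") simp_all
qed

lemma coarse_factor_approx:
  assumes "0 \<le> x" "x \<le> 1"
  shows "\<bar>(1 - q * x)^k - (1 - p * x)\<bar> \<le> p^2 / 2"
proof -
  have y: "0 \<le> q * x" "q * x \<le> 1" using q_factor_range[OF assms] q_pos assms by auto
  have kqx: "real k * (q * x) = p * x" using k_times_q by (simp add: mult.assoc[symmetric])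
  have "(p * x)^2 \<le> p^2"
    using assms p_pos by (simp add: power_mult_distrib mult_left_le power_le_one)
  then show ?thesis using power_one_minus_bounds[OF y, of k] kqx by (simp add: abs_le_iff)
qed

(* Completing a block: the product of k fine factors is replaced by the
   coarse factor, at cost p^2/2. *)
lemma block_approx_next:
  assumes m: "1 \<le> m" and approx: "block_approx a m k"
  shows "block_approx a (Suc m) 0"
proof -
  have "\<bar>nbS p (cell a) m * block_factor a m k - nbS p (cell a) (Suc m)\<bar> \<le> p^2 / 2"
  proof (cases "m = cell a")
    case True
    then show ?thesis using nbS_Suc_factor[OF m, of p "cell a"] p_pos
      by (simp add: block_factor_def)
  next
    case False
    then have "\<bar>nbS p (cell a) m * block_factor a m k - nbS p (cell a) (Suc m)\<bar>
        = nbS p (cell a) m * \<bar>(1 - q * nbS p m (cell a))^k - (1 - p * nbS p m (cell a))\<bar>"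
      using nbS_Suc_factor[OF m, of p "cell a"] S_p_range
      by (simp add: block_factor_def abs_mult flip: right_diff_distrib)
    also have "\<dots> \<le> 1 * (p^2 / 2)"
      using S_p_range coarse_factor_approx[OF S_p_range] by (intro mult_mono) auto
    finally show ?thesis by simp
  qed
  moreover have "(Suc m - 1) * k + 0 + 1 = (m - 1) * k + k + 1" using m by (cases m) auto
  moreover have "block_factor a (Suc m) 0 = 1" by (simp add: block_factor_def)
  ultimately show ?thesis
    using approx block_err_next[OF m, of a] unfolding block_approx_def
    by (simp only: mult_1_right)
qed

lemma block_approx_start: "block_approx a 1 0"
  by (simp add: block_approx_def block_factor_def block_err_def cell_def nbS_init)

lemma block_approx_all:
  assumes "1 \<le> m" "r \<le> k"
  shows "block_approx a m r"
proof -
  have along_block: "block_approx a m r" if "1 \<le> m" "block_approx a m 0" "r \<le> k" for m r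
    using that by (induction r) (auto intro: block_approx_step)
  from assms show ?thesis
  proof (induction m arbitrary: r rule: nat_induct_at_least)
    case base
    then show ?case using along_block block_approx_start by simp
  next
    case (Suc m)
    then show ?case using along_block block_approx_next by simp
  qed
qed

definition local_err :: real where "local_err = real M * p^2 / 2 + 2 * p"

lemma E_recursion:
  assumes b: "b \<in> {1..k * M}"
  shows "E a b \<le> local_err + q * (\<Sum>c\<in>{1..<b}. E c a)"
proof -
  define m r where "m = cell b" and "r = (b - 1) mod k"
  have idx: "(m - 1) * k + r + 1 = b" using b by (simp add: m_def r_def cell_def)
  have "b - 1 < M * k" using b by (auto simp: mult.commute)
  then have m: "1 \<le> m" "m \<le> M"
    using less_mult_imp_div_less[of "b - 1" M k] by (auto simp: m_def cell_def)
  have r: "r \<le> k" using k_pos by (simp add: r_def less_imp_le)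
  have "\<bar>nbS q a b - nbS p (cell a) m * block_factor a m r\<bar>
      \<le> block_err a m r + q * (\<Sum>c\<in>{1..<b}. E c a)"
    using block_approx_all[OF m(1) r, of a] unfolding block_approx_def idx .
  moreover have "\<bar>nbS p (cell a) m * block_factor a m r - nbS p (cell a) m\<bar>
      \<le> (if m = cell a then 0 else p)"
  proof -
    have "nbS p (cell a) m * block_factor a m r - nbS p (cell a) m
        = nbS p (cell a) m * (block_factor a m r - 1)" by (simp add: algebra_simps)
    then have "\<bar>nbS p (cell a) m * block_factor a m r - nbS p (cell a) m\<bar>
        = nbS p (cell a) m * \<bar>block_factor a m r - 1\<bar>"
      using S_p_range by (simp add: abs_mult)
    also have "\<dots> \<le> 1 * (if m = cell a then 0 else p)"
      using S_p_range block_factor_close[OF r] by (intro mult_mono) auto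
    finally show ?thesis by simp
  qed
  moreover have "E a b = \<bar>nbS q a b - nbS p (cell a) m\<bar>" by (simp add: E_def m_def)
  ultimately show ?thesis
    using block_err_bound[OF m(2) r, of a] unfolding local_err_def by linarith
qed

(* Gronwall with (1 + q)^(2kM) <= exp (2d) gives a uniform discrepancy bound. *)
lemma E_bound:
  assumes "a \<in> {1..k * M}" "b \<in> {1..k * M}"
  shows "E a b \<le> local_err * exp (2 * d)"
proof -
  have "E a b \<le> local_err * (1 + q)^(a + b)"
    using discrete_gronwall[of local_err q "k * M" E] E_recursion assms p_pos q_pos
    by (simp add: local_err_def)
  also have "\<dots> \<le> local_err * (1 + q)^(2 * (k * M))"
    using assms q_pos p_pos by (intro mult_left_mono power_increasing) (auto simp: local_err_def)
  also have "\<dots> \<le> local_err * exp q ^ (2 * (k * M))"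
    using q_pos p_pos by (intro mult_left_mono power_mono) (auto simp: local_err_def add.commute)
  also have "exp q ^ (2 * (k * M)) = exp (2 * d)"
    using k_pos M_pos by (simp add: q_def flip: exp_of_nat_mult)
  finally show ?thesis .
qed

lemma scaledD_refine_bound:
  assumes "\<alpha> \<in> {0..<1}" "\<beta> \<in> {0..<1}"
  shows "\<bar>scaledD d (k * M) \<alpha> \<beta> - scaledD d M \<alpha> \<beta>\<bar> \<le> 8 * d^2 * exp (8 * d) / real M"
proof -
  have kM: "1 \<le> k * M" using k_pos M_pos by simp
  define x y where "x = iM (k * M) \<alpha>" and "y = iM (k * M) \<beta>"
  have xy: "x \<in> {1..k * M}" "y \<in> {1..k * M}"
    using iM_range[OF kM] assms by (auto simp: x_def y_def)
  have "cell x = iM M \<alpha>" "cell y = iM M \<beta>"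
    using iM_refine[OF k_pos] assms by (auto simp: x_def y_def cell_def)
  then have "\<bar>scaledD d (k * M) \<alpha> \<beta> - scaledD d M \<alpha> \<beta>\<bar>
      = d * \<bar>nbS q x y * nbS q y x - nbS p (cell x) (cell y) * nbS p (cell y) (cell x)\<bar>"
    using scaledD_eq_product[OF kM] scaledD_eq_product[OF M_pos] assms d_pos
    by (simp add: x_def y_def p_def q_def abs_mult flip: right_diff_distrib)
  also have "\<dots> \<le> d * (E x y + E y x)"
    using d_pos S_p_range S_q_range
    by (intro mult_left_mono) (auto simp: E_def intro!: abs_mult_diff_le)
  also have "\<dots> \<le> d * (2 * (local_err * exp (2 * d)))"
    using d_pos E_bound[OF xy] E_bound[OF xy(2,1)] by (intro mult_left_mono) auto
  also have "\<dots> = (d^3 + 4 * d^2) * exp (2 * d) / real M"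
    using M_pos by (simp add: local_err_def p_def field_simps power2_eq_square power3_eq_cube)
  also have "\<dots> \<le> 8 * d^2 * exp (8 * d) / real M"
    using exp_constant_bound[OF d_pos] M_pos by (intro divide_right_mono) auto
  finally show ?thesis .
qed

end

(* Two resolutions N1, N2 >= N are both compared with N1 * N2. *)
theorem mainTheorem2:
  fixes d :: real and N N1 N2 :: nat
  assumes "d > 0" and "real N > d" and "N1 \<ge> N" and "N2 \<ge> N"
  shows "(SUP ab \<in> {0..<1} \<times> {0..<1}.
            \<bar>scaledD d N1 (fst ab) (snd ab) - scaledD d N2 (fst ab) (snd ab)\<bar>)
         \<le> 16 * d^2 / real N * exp (8 * d)"
proof (rule cSUP_least)
  define C where "C = 8 * d^2 * exp (8 * d)"
  have refinements: "refinement d N1 N2" "refinement d N2 N1"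
    using assms by (simp_all add: refinement_def)
  have C_over: "C / real N' \<le> C / real N" if "N' \<ge> N" for N'
    using that assms by (intro divide_left_mono) (auto simp: C_def)
  fix ab :: "real \<times> real"
  assume ab: "ab \<in> {0..<1} \<times> {0..<1}"
  define \<alpha> \<beta> where "\<alpha> = fst ab" and "\<beta> = snd ab"
  have "\<bar>scaledD d (N1 * N2) \<alpha> \<beta> - scaledD d N1 \<alpha> \<beta>\<bar> \<le> C / real N1"
    using refinement.scaledD_refine_bound[OF refinements(1)] ab
    by (auto simp: \<alpha>_def \<beta>_def C_def mult.commute[of N1 N2])
  moreover have "\<bar>scaledD d (N1 * N2) \<alpha> \<beta> - scaledD d N2 \<alpha> \<beta>\<bar> \<le> C / real N2"
    using refinement.scaledD_refine_bound[OF refinements(2)] ab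
    by (auto simp: \<alpha>_def \<beta>_def C_def)
  moreover have "16 * d^2 / real N * exp (8 * d) = C / real N + C / real N"
    by (simp add: C_def)
  ultimately show "\<bar>scaledD d N1 \<alpha> \<beta> - scaledD d N2 \<alpha> \<beta>\<bar> \<le> 16 * d^2 / real N * exp (8 * d)"
    using C_over[OF assms(3)] C_over[OF assms(4)] by linarith
qed auto

end
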